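(* For every integer $m\ge3$, \[ \sum_{n=1}^{\infty}\frac{h_n^{(2)}}{n^{m}}=\sum_{n=1}^{\infty}H_n\,\zeta(m,n)=\zeta_H(m-1)+\zeta_H(m)-\zeta(m-1). \]
   Context: Hyperharmonic numbers: $h_n^{(0)}=1/n$ for $n\ge1$, and for $r\ge1$, $h_n^{(r)}=\sum_{j=1}^{n}h_j^{(r-1)}$. $H_n=\sum_{j=1}^n 1/j$. $\zeta$ is the Riemann zeta function, $\zeta(s,a)=\sum_{j=0}^\infty (j+a)^{-s}$ the Hurwitz zeta function, and $\zeta_H(s)=\sum_{n=1}^{\infty}H_n/n^{s}$ for integers $s\ge2$. *)

theory Defs
  imports "HOL-Analysis.Analysis"
begin

text \<open>Hyperharmonic numbers h_n^(r) (only meaningful for n \<ge> 1;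
  the value at n = 0 is set to 0, which matches the empty sum for r \<ge> 1).\<close>
fun hyperharm :: "nat \<Rightarrow> nat \<Rightarrow> real" where
  "hyperharm 0 n = (if n = 0 then 0 else 1 / real n)"
| "hyperharm (Suc r) n = (\<Sum>j=1..n. hyperharm r j)"

definition rzeta :: "nat \<Rightarrow> real" where
  "rzeta s = (\<Sum>n. 1 / (real (Suc n)) ^ s)"

definition hzeta :: "nat \<Rightarrow> real \<Rightarrow> real" where
  "hzeta s a = (\<Sum>j. 1 / (real j + a) ^ s)"

definition zetaH :: "nat \<Rightarrow> real" where
  "zetaH s = (\<Sum>n. harm (Suc n) / (real (Suc n)) ^ s)"

end

theory Submission
  imports Defs
begin

text \<open>Since h_n^(2) = H_1 + ... + H_n, the series of h_k^(2)/k^m is the double series of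
  H_n/k^m over n \<le> k, whose terms are nonnegative; summing over k \<ge> n first gives the series
  of H_n \<zeta>(m,n). On the other hand the closed form h_k^(2) = (k+1) H_k - k splits h_k^(2)/k^m into
  H_k/k^(m-1) + H_k/k^m - 1/k^(m-1), whose sums are \<zeta>_H(m-1), \<zeta>_H(m) and \<zeta>(m-1).
  All series converge because H_n \<le> 3 \<surd>n.\<close>

lemma hyperharm_1: "hyperharm 1 = harm"
  by (rule ext) (simp add: harm_def divide_inverse)

lemma hyperharm_2_eq_sum_harm: "hyperharm 2 n = (\<Sum>j=1..n. harm j)"
  by (simp add: numeral_2_eq_2 hyperharm_1 [unfolded One_nat_def])

lemma hyperharm_2_Suc_eq_sum_harm: "hyperharm 2 (Suc k) = (\<Sum>n\<le>k. harm (Suc n))"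
  unfolding hyperharm_2_eq_sum_harm by (induction k) auto

lemma hyperharm_2_closed_form: "hyperharm 2 n = (real n + 1) * harm n - real n"
proof (induction n)
  case 0
  then show ?case by (simp add: hyperharm_2_eq_sum_harm harm_def)
next
  case (Suc n)
  have "hyperharm 2 (Suc n) = hyperharm 2 n + harm (Suc n)"
    unfolding hyperharm_2_eq_sum_harm by simp
  also have "\<dots> = (real (Suc n) + 1) * harm (Suc n) - real (Suc n)"
    unfolding Suc harm_Suc by (simp add: field_simps)
  finally show ?case .
qed

lemma hyperharm_2_Suc_div_power:
  assumes "m \<ge> 1"
  shows "hyperharm 2 (Suc k) / real (Suc k) ^ m =
    harm (Suc k) / real (Suc k) ^ (m - 1) + harm (Suc k) / real (Suc k) ^ m
    - 1 / real (Suc k) ^ (m - 1)"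
proof -
  obtain p where m: "m = Suc p" using assms by (cases m) auto
  define x where "x = real (Suc k)"
  have "x > 0" "x ^ p > 0" by (simp_all add: x_def)
  then have "((x + 1) * harm (Suc k) - x) / (x * x ^ p) =
      harm (Suc k) / x ^ p + harm (Suc k) / (x * x ^ p) - 1 / x ^ p"
    by (simp add: field_simps)
  then show ?thesis
    unfolding m hyperharm_2_closed_form x_def by simp
qed

lemma harm_le_3_sqrt: "harm n \<le> 3 * sqrt (real n)"
proof (cases "n = 0")
  case True
  then show ?thesis by (simp add: harm_def)
next
  case False
  have "harm n - ln (real n) \<le> harm 1 - ln (real 1)"
    using euler_mascheroni_sequence_decreasing[of 1 n] False by simp
  then have "harm n \<le> ln (real n) + 1" by (simp add: harm_def)
  also have "ln (real n) = 2 * ln (sqrt (real n))"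
    using False by (simp add: ln_sqrt)
  also have "\<dots> \<le> 2 * (sqrt (real n) - 1)"
    using ln_le_minus_one[of "sqrt (real n)"] False by simp
  also have "2 * (sqrt (real n) - 1) + 1 \<le> 3 * sqrt (real n)"
    by (smt (verit) real_sqrt_ge_zero of_nat_0_le_iff)
  finally show ?thesis by simp
qed

lemma summable_inverse_Suc_power:
  assumes "s \<ge> 2"
  shows "summable (\<lambda>k. 1 / real (Suc k) ^ s)"
proof -
  have "summable (\<lambda>n. inverse (real n ^ s))" by (rule inverse_power_summable[OF assms])
  then have "summable (\<lambda>k. inverse (real (Suc k) ^ s))" by (subst summable_Suc_iff)
  then show ?thesis by (simp add: divide_inverse)
qed

lemma summable_harm_div_power:
  assumes "s \<ge> 2"
  shows "summable (\<lambda>k. harm (Suc k) / real (Suc k) ^ s)"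
proof (rule summable_comparison_test)
  have "summable (\<lambda>n. real n powr (-3/2))" by (simp add: summable_real_powr_iff)
  then have "summable (\<lambda>k. real (Suc k) powr (-3/2))" by (subst summable_Suc_iff)
  then show "summable (\<lambda>k. 3 * real (Suc k) powr (-3/2))" by (rule summable_mult)
  show "\<exists>N. \<forall>k\<ge>N. norm (harm (Suc k) / real (Suc k) ^ s) \<le> 3 * real (Suc k) powr (-3/2)"
  proof (intro exI allI impI)
    fix k :: nat
    define x where "x = real (Suc k)"
    have x_ge_1: "x \<ge> 1" by (simp add: x_def)
    have "sqrt x / x ^ 2 = x powr (1/2) / x powr 2"
      using x_ge_1 by (simp add: powr_half_sqrt powr_realpow)
    also have "\<dots> = x powr (-3/2)"
      by (simp add: powr_diff[symmetric])
    finally have sqrt_div_square: "sqrt x / x ^ 2 = x powr (-3/2)" .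
    have "harm (Suc k) / x ^ s \<le> 3 * sqrt x / x ^ s"
      using harm_le_3_sqrt[of "Suc k"] x_ge_1 by (simp add: x_def divide_right_mono)
    also have "\<dots> \<le> 3 * sqrt x / x ^ 2"
      using x_ge_1 assms by (intro divide_left_mono power_increasing) auto
    also have "\<dots> = 3 * x powr (-3/2)"
      using sqrt_div_square by simp
    finally show "norm (harm (Suc k) / real (Suc k) ^ s) \<le> 3 * real (Suc k) powr (-3/2)"
      by (simp add: x_def harm_nonneg)
  qed
qed

lemma has_sum_atLeast_shifted_suminf:
  fixes f :: "nat \<Rightarrow> real"
  assumes "summable f" and "\<And>k. f k \<ge> 0"
  shows "(f has_sum (\<Sum>j. f (j + n))) {n..}"
proof -
  have "(\<lambda>j. f (j + n)) sums (\<Sum>j. f (j + n))"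
    using assms(1) by (simp add: summable_iff_shift summable_sums)
  then have "((\<lambda>j. f (j + n)) has_sum (\<Sum>j. f (j + n))) UNIV"
    by (rule sums_nonneg_imp_has_sum) (simp add: assms(2))
  moreover have "range (\<lambda>j. j + n) = {n..}"
    by (auto, metis le_add_diff_inverse2 rangeI)
  ultimately show ?thesis
    using has_sum_reindex[of "\<lambda>j. j + n" UNIV f] by (simp add: o_def)
qed

lemma sums_swap_partial_sums:
  fixes a f :: "nat \<Rightarrow> real"
  assumes a_nonneg: "\<And>n. a n \<ge> 0" and f_nonneg: "\<And>k. f k \<ge> 0" and "summable f"
    and sums_S: "(\<lambda>k. (\<Sum>n\<le>k. a n) * f k) sums S"
  shows "(\<lambda>n. a n * (\<Sum>j. f (j + n))) sums S"
proof -
  define F where "F = (\<lambda>(k, n). a n * f k)"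
  have rows: "((\<lambda>n. F (k, n)) has_sum (\<Sum>n\<le>k. a n) * f k) {..k}" for k
    using has_sum_finite[of "{..k}" "\<lambda>n. F (k, n)"]
    by (simp add: F_def sum_distrib_right)
  have "((\<lambda>k. (\<Sum>n\<le>k. a n) * f k) has_sum S) UNIV"
    using sums_S by (rule sums_nonneg_imp_has_sum)
      (simp add: a_nonneg f_nonneg sum_nonneg)
  moreover from this have "F summable_on Sigma UNIV (\<lambda>k. {..k})"
    by (intro summable_on_SigmaI[OF rows])
      (auto simp: F_def summable_on_def a_nonneg f_nonneg)
  ultimately have F_has_sum: "(F has_sum S) (Sigma UNIV (\<lambda>k. {..k}))"
    by (rule has_sum_SigmaI[OF rows])
  have swap: "bij_betw (\<lambda>(n, k). (k, n)) (Sigma UNIV (\<lambda>n. {n..})) (Sigma UNIV (\<lambda>k. {..k}))"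
    by (rule bij_betwI[of _ _ _ "\<lambda>(k, n). (n, k)"]) auto
  have "((\<lambda>x. F ((\<lambda>(n, k). (k, n)) x)) has_sum S) (Sigma UNIV (\<lambda>n. {n..}))"
    unfolding has_sum_reindex_bij_betw[OF swap] by (rule F_has_sum)
  moreover have "(\<lambda>x. F ((\<lambda>(n, k). (k, n)) x)) = (\<lambda>(n, k). a n * f k)"
    by (auto simp: F_def)
  ultimately have columns_has_sum: "((\<lambda>(n, k). a n * f k) has_sum S) (Sigma UNIV (\<lambda>n. {n..}))"
    by simp
  have column: "((\<lambda>k. a n * f k) has_sum a n * (\<Sum>j. f (j + n))) {n..}" for n
    using assms by (intro has_sum_cmult_right has_sum_atLeast_shifted_suminf) auto
  have "((\<lambda>n. a n * (\<Sum>j. f (j + n))) has_sum S) UNIV"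
    using has_sum_SigmaD[OF columns_has_sum] column by simp
  then show ?thesis by (rule has_sum_imp_sums)
qed

lemma hzeta_Suc_eq_suminf_shift:
  "hzeta m (real (Suc n)) = (\<Sum>j. 1 / real (Suc (j + n)) ^ m)"
  unfolding hzeta_def by (intro suminf_cong) (simp add: add_ac)

lemma sums_hyperharm_2_div_power:
  assumes "m \<ge> 3"
  shows "(\<lambda>k. hyperharm 2 (Suc k) / real (Suc k) ^ m)
    sums (zetaH (m - 1) + zetaH m - rzeta (m - 1))"
proof -
  have zetaH: "(\<lambda>k. harm (Suc k) / real (Suc k) ^ s) sums zetaH s" if "s \<ge> 2" for s
    unfolding zetaH_def by (rule summable_sums, rule summable_harm_div_power[OF that])
  have rzeta: "(\<lambda>k. 1 / real (Suc k) ^ s) sums rzeta s" if "s \<ge> 2" for s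
    unfolding rzeta_def by (rule summable_sums, rule summable_inverse_Suc_power[OF that])
  have "m \<ge> 1" "m - 1 \<ge> 2" "m \<ge> 2" using assms by simp_all
  then show ?thesis
    unfolding hyperharm_2_Suc_div_power[OF \<open>m \<ge> 1\<close>]
    by (intro sums_diff sums_add zetaH rzeta)
qed

theorem mainTheorem3:
  fixes m :: nat
  assumes "m \<ge> 3"
  shows "summable (\<lambda>n. hyperharm 2 (Suc n) / (real (Suc n)) ^ m)
    \<and> summable (\<lambda>n. harm (Suc n) * hzeta m (real (Suc n)))
    \<and> (\<Sum>n. hyperharm 2 (Suc n) / (real (Suc n)) ^ m)
          = (\<Sum>n. harm (Suc n) * hzeta m (real (Suc n)))
    \<and> (\<Sum>n. harm (Suc n) * hzeta m (real (Suc n)))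
          = zetaH (m - 1) + zetaH m - rzeta (m - 1)"
proof -
  define Z where "Z = zetaH (m - 1) + zetaH m - rzeta (m - 1)"
  have lhs: "(\<lambda>k. hyperharm 2 (Suc k) / real (Suc k) ^ m) sums Z"
    unfolding Z_def using assms by (rule sums_hyperharm_2_div_power)
  have "(\<lambda>n. harm (Suc n) * (\<Sum>j. 1 / real (Suc (j + n)) ^ m)) sums Z"
  proof (rule sums_swap_partial_sums)
    show "summable (\<lambda>k. 1 / real (Suc k) ^ m)"
      using assms by (intro summable_inverse_Suc_power) simp
    show "(\<lambda>k. (\<Sum>n\<le>k. harm (Suc n)) * (1 / real (Suc k) ^ m)) sums Z"
      using lhs by (simp add: hyperharm_2_Suc_eq_sum_harm)
  qed (simp_all add: harm_nonneg)
  then have rhs: "(\<lambda>n. harm (Suc n) * hzeta m (real (Suc n))) sums Z"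
    unfolding hzeta_Suc_eq_suminf_shift .
  from lhs rhs show ?thesis
    by (auto simp: sums_iff Z_def)
qed

end
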